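(* Let $(X,x)$ be a pointed diffeological space and let $\mathcal{C}$ be a local generating category of curves of $X$ at $x$. Then the natural map $\operatorname{colim}(\mathcal{C} \hookrightarrow \mathcal{G}(X,x) \to \mathrm{Vect}) \to T_x(X)$ is an epimorphism.
   Context: A diffeological space is a set $X$ together with, for every open subset $U$ of every $\mathbb{R}^n$, a set of functions $U\to X$ called plots, such that constant maps are plots, the composite of a plot with a smooth map $V\to U$ between open subsets of Euclidean spaces is a plot, and a function which is locally a plot is a plot; smooth maps send plots to plots. For a pointed diffeological space $(X,x)$, let $\mathcal{G}(X,x)$ be the category whose objects are plots $p:U\to X$ with $U$ a connected open neighbourhood of $0$ in some $\mathbb{R}^n$ and $p(0)=x$, and whose morphisms $p\to q$ (with $q:V\to X$) are germs at $0$ of smooth maps $f:W\to V$, $W$ an open neighbourhood of $0$ in $U$, with $f(0)=0$ and $p|_W=q\circ f$. The functor $\mathcal{G}(X,x)\to\mathrm{Vect}$ sends $p:U\to X$ to $T_0(U)$ and $[f]$ to $f_*:T_0(U)\to T_0(V)$; its colimit is the internal tangent space $T_x(X)$. A local generating set of curves of $X$ at $x$ is a set $C$ of objects of $\mathcal{G}(X,x)$ with domain $\mathbb{R}$ such that for each object $p:\mathbb{R}\to X$ of $\mathcal{G}(X,x)$ there exist $q\in C$ and a morphism $p\to q$ in $\mathcal{G}(X,x)$. A local generating category of curves of $X$ at $x$ is a subcategory $\mathcal{C}$ of $\mathcal{G}(X,x)$ whose object set is a local generating set of curves. *)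

theory Defs
  imports "HOL-Analysis.Analysis" "HOL-Library.FuncSet"
begin

text \<open>R^n is the set of real sequences vanishing from index n on; the topology is the
product topology on nat => real, which restricts to the Euclidean topology on R^n.\<close>

definition Rn :: "nat \<Rightarrow> (nat \<Rightarrow> real) set" where
  "Rn n = {v. \<forall>i\<ge>n. v i = 0}"

definition origin :: "nat \<Rightarrow> real" where
  "origin = (\<lambda>_. 0)"

definition open_in_Rn :: "nat \<Rightarrow> (nat \<Rightarrow> real) set \<Rightarrow> bool" where
  "open_in_Rn n U \<longleftrightarrow> openin (top_of_set (Rn n)) U"

fun Ck :: "nat \<Rightarrow> nat \<Rightarrow> (nat \<Rightarrow> real) set \<Rightarrow> ((nat \<Rightarrow> real) \<Rightarrow> real) \<Rightarrow> bool" where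
  "Ck 0 m V g = continuous_on V g"
| "Ck (Suc k) m V g = (continuous_on V g \<and>
     (\<forall>i<m. \<exists>h. (\<forall>v\<in>V. ((\<lambda>t. g (v(i := v i + t))) has_real_derivative h v) (at 0))
                 \<and> Ck k m V h))"

definition smooth_fun :: "nat \<Rightarrow> (nat \<Rightarrow> real) set \<Rightarrow> ((nat \<Rightarrow> real) \<Rightarrow> real) \<Rightarrow> bool" where
  "smooth_fun m V g \<longleftrightarrow> (\<forall>k. Ck k m V g)"

definition smooth_map :: "nat \<Rightarrow> (nat \<Rightarrow> real) set \<Rightarrow> ((nat \<Rightarrow> real) \<Rightarrow> (nat \<Rightarrow> real)) \<Rightarrow> bool" where
  "smooth_map m V g \<longleftrightarrow> (\<forall>j. smooth_fun m V (\<lambda>v. g v j))"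

text \<open>Tangent map f_* : T_0(R^n) = R^n \<rightarrow> R^m = T_0(R^m) at the origin (Jacobian at 0).\<close>
definition push :: "nat \<Rightarrow> nat \<Rightarrow> ((nat \<Rightarrow> real) \<Rightarrow> (nat \<Rightarrow> real)) \<Rightarrow> (nat \<Rightarrow> real) \<Rightarrow> (nat \<Rightarrow> real)" where
  "push n m f v = (\<lambda>j. if j < m then (\<Sum>i<n. deriv (\<lambda>t. f (origin(i := t)) j) 0 * v i) else 0)"

text \<open>A plot is a triple (n, U, p) with U open in R^n and p : U \<rightarrow> X (extensional on U).\<close>
type_synonym 'a plot = "nat \<times> (nat \<Rightarrow> real) set \<times> ((nat \<Rightarrow> real) \<Rightarrow> 'a)"

definition diffeology :: "'a set \<Rightarrow> 'a plot set \<Rightarrow> bool" where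
  "diffeology X D \<longleftrightarrow>
     (\<forall>(n, U, p)\<in>D. open_in_Rn n U \<and> p \<in> extensional U \<and> p ` U \<subseteq> X) \<and>
     (\<forall>n U y. open_in_Rn n U \<and> y \<in> X \<longrightarrow> (n, U, restrict (\<lambda>_. y) U) \<in> D) \<and>
     (\<forall>n U p m V g. (n, U, p) \<in> D \<and> open_in_Rn m V \<and> g ` V \<subseteq> U \<and> smooth_map m V g
        \<longrightarrow> (m, V, restrict (p \<circ> g) V) \<in> D) \<and>
     (\<forall>n U p. open_in_Rn n U \<and> p \<in> extensional U \<and> p ` U \<subseteq> X \<and>
        (\<forall>u\<in>U. \<exists>W. open_in_Rn n W \<and> u \<in> W \<and> W \<subseteq> U \<and> (n, W, restrict p W) \<in> D)
        \<longrightarrow> (n, U, p) \<in> D)"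

definition obj_G :: "'a plot set \<Rightarrow> 'a \<Rightarrow> 'a plot set" where
  "obj_G D x = {(n, U, p). (n, U, p) \<in> D \<and> connected U \<and> origin \<in> U \<and> p origin = x}"

definition mor_rep :: "'a plot \<Rightarrow> 'a plot \<Rightarrow> (nat \<Rightarrow> real) set \<times> ((nat \<Rightarrow> real) \<Rightarrow> (nat \<Rightarrow> real)) \<Rightarrow> bool" where
  "mor_rep p q r \<longleftrightarrow> (case p of (n, U, pp) \<Rightarrow> case q of (m, V, qq) \<Rightarrow> case r of (W, f) \<Rightarrow>
      open_in_Rn n W \<and> origin \<in> W \<and> W \<subseteq> U \<and> f ` W \<subseteq> V \<and> smooth_map n W f \<and>
      f origin = origin \<and> (\<forall>w\<in>W. pp w = qq (f w)))"

text \<open>The germ at 0 of a representative: all representatives agreeing with it near 0.\<close>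
definition germ_of :: "'a plot \<Rightarrow> 'a plot \<Rightarrow> (nat \<Rightarrow> real) set \<times> ((nat \<Rightarrow> real) \<Rightarrow> (nat \<Rightarrow> real))
    \<Rightarrow> ((nat \<Rightarrow> real) set \<times> ((nat \<Rightarrow> real) \<Rightarrow> (nat \<Rightarrow> real))) set" where
  "germ_of p q r = {r'. mor_rep p q r' \<and>
      (\<exists>W''. open_in_Rn (fst p) W'' \<and> origin \<in> W'' \<and> W'' \<subseteq> fst r \<inter> fst r' \<and>
             (\<forall>w\<in>W''. snd r w = snd r' w))}"

definition mor_G :: "'a plot set \<Rightarrow> 'a \<Rightarrow>
    ('a plot \<times> 'a plot \<times> ((nat \<Rightarrow> real) set \<times> ((nat \<Rightarrow> real) \<Rightarrow> (nat \<Rightarrow> real))) set) set" where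
  "mor_G D x = {(p, q, germ_of p q r) | p q r. p \<in> obj_G D x \<and> q \<in> obj_G D x \<and> mor_rep p q r}"

definition subcategory_G :: "'a plot set \<Rightarrow> 'a \<Rightarrow> 'a plot set \<Rightarrow>
    ('a plot \<times> 'a plot \<times> ((nat \<Rightarrow> real) set \<times> ((nat \<Rightarrow> real) \<Rightarrow> (nat \<Rightarrow> real))) set) set \<Rightarrow> bool" where
  "subcategory_G D x Ob Mo \<longleftrightarrow>
     Ob \<subseteq> obj_G D x \<and> Mo \<subseteq> mor_G D x \<and>
     (\<forall>(p, q, F)\<in>Mo. p \<in> Ob \<and> q \<in> Ob) \<and>
     (\<forall>p\<in>Ob. (p, p, germ_of p p (fst (snd p), id)) \<in> Mo) \<and>
     (\<forall>p q r F H. (p, q, F) \<in> Mo \<longrightarrow> (q, r, H) \<in> Mo \<longrightarrow>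
        (\<forall>f\<in>F. \<forall>h\<in>H. (p, r, germ_of p r ({w\<in>fst f. snd f w \<in> fst h}, snd h \<circ> snd f)) \<in> Mo))"

definition local_generating_set :: "'a plot set \<Rightarrow> 'a \<Rightarrow> 'a plot set \<Rightarrow> bool" where
  "local_generating_set D x C \<longleftrightarrow>
     C \<subseteq> obj_G D x \<and> (\<forall>q\<in>C. fst q = 1 \<and> fst (snd q) = Rn 1) \<and>
     (\<forall>p\<in>obj_G D x. fst p = 1 \<and> fst (snd p) = Rn 1 \<longrightarrow> (\<exists>q\<in>C. \<exists>r. mor_rep p q r))"

definition local_generating_category :: "'a plot set \<Rightarrow> 'a \<Rightarrow> 'a plot set \<Rightarrow>
    ('a plot \<times> 'a plot \<times> ((nat \<Rightarrow> real) set \<times> ((nat \<Rightarrow> real) \<Rightarrow> (nat \<Rightarrow> real))) set) set \<Rightarrow> bool" where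
  "local_generating_category D x Ob Mo \<longleftrightarrow> subcategory_G D x Ob Mo \<and> local_generating_set D x Ob"

definition linear_on_Rn :: "nat \<Rightarrow> ((nat \<Rightarrow> real) \<Rightarrow> 'w::real_vector) \<Rightarrow> bool" where
  "linear_on_Rn n \<phi> \<longleftrightarrow> (\<forall>u\<in>Rn n. \<forall>v\<in>Rn n. \<forall>a::real.
      \<phi> (\<lambda>i. u i + v i) = \<phi> u + \<phi> v \<and> \<phi> (\<lambda>i. a * v i) = a *\<^sub>R \<phi> v)"

text \<open>A cocone over G(X,x) with vertex the real vector space 'w; by the universal property
these correspond exactly to linear maps T_x(X) \<rightarrow> 'w.\<close>
definition cocone_G :: "'a plot set \<Rightarrow> 'a \<Rightarrow> ('a plot \<Rightarrow> (nat \<Rightarrow> real) \<Rightarrow> 'w::real_vector) \<Rightarrow> bool" where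
  "cocone_G D x \<phi> \<longleftrightarrow>
     (\<forall>p\<in>obj_G D x. linear_on_Rn (fst p) (\<phi> p)) \<and>
     (\<forall>p\<in>obj_G D x. \<forall>q\<in>obj_G D x. \<forall>r. mor_rep p q r \<longrightarrow>
        (\<forall>v\<in>Rn (fst p). \<phi> q (push (fst p) (fst q) (snd r) v) = \<phi> p v))"

end

theory Submission
  imports Defs
begin

text \<open>Every tangent vector v at the base point of a plot p is the velocity of a curve
through p: after rescaling v so that the segment [-1,1] v lies in the domain of p, the curve
t \<mapsto> p (sin t \<cdot> v) is defined on all of R, factors through p, and has velocity v at 0. This
curve factors in turn through a curve of the generating category, so two cocones agreeing on
the generating category agree on v; linearity undoes the rescaling.\<close>

definition sin_ray :: "(nat \<Rightarrow> real) \<Rightarrow> (nat \<Rightarrow> real) \<Rightarrow> (nat \<Rightarrow> real)" where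
  "sin_ray v w = (\<lambda>j. sin (w 0) * v j)"

lemma Ck_sin_cos_combination: "Ck k 1 V (\<lambda>w. a * sin (w 0) + b * cos (w 0))"
proof (induction k arbitrary: a b)
  case 0
  show ?case
    by (simp, intro continuous_intros continuous_on_product_coordinates[THEN continuous_on_subset]; simp)
next
  case (Suc k)
  let ?f = "\<lambda>w::nat \<Rightarrow> real. a * sin (w 0) + b * cos (w 0)"
  let ?f' = "\<lambda>w::nat \<Rightarrow> real. (- b) * sin (w 0) + a * cos (w 0)"
  have "continuous_on V ?f"
    by (intro continuous_intros continuous_on_product_coordinates[THEN continuous_on_subset]; simp)
  moreover have "((\<lambda>t. ?f (v(0 := v 0 + t))) has_real_derivative ?f' v) (at 0)" for v
    by (auto intro!: derivative_eq_intros)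
  ultimately show ?case
    using Suc[of "- b" a] by (auto simp only: Ck.simps less_one intro!: exI[of _ ?f'])
qed

lemma smooth_map_sin_ray: "smooth_map 1 V (sin_ray v)"
  unfolding smooth_map_def smooth_fun_def sin_ray_def
  using Ck_sin_cos_combination[of _ V "v _" 0] by (simp add: mult.commute)

lemma push_sin_ray:
  assumes "v \<in> Rn n"
  shows "push 1 n (sin_ray v) (origin(0 := 1)) = v"
proof
  fix j
  have "((\<lambda>t. sin_ray v (origin(0 := t)) j) has_real_derivative cos 0 * v j) (at 0)"
    unfolding sin_ray_def by (auto intro!: derivative_eq_intros)
  then have "deriv (\<lambda>t. sin_ray v (origin(0 := t)) j) 0 = v j"
    by (simp add: DERIV_imp_deriv)
  then show "push 1 n (sin_ray v) (origin(0 := 1)) j = v j"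
    using assms by (auto simp: push_def Rn_def)
qed

lemma Rn_1_eq_range: "Rn 1 = range (\<lambda>t. origin(0 := t))"
proof
  show "Rn 1 \<subseteq> range (\<lambda>t. origin(0 := t))"
  proof
    fix v assume "v \<in> Rn 1"
    then have "v = origin(0 := v 0)" by (auto simp: Rn_def origin_def fun_eq_iff)
    then show "v \<in> range (\<lambda>t. origin(0 := t))" by blast
  qed
qed (auto simp: Rn_def origin_def)

lemma connected_Rn_1: "connected (Rn 1)"
proof -
  have "continuous_on UNIV (\<lambda>t::real. origin(0 := t))"
  proof (intro continuous_on_coordinatewise_then_product)
    fix i :: nat
    show "continuous_on UNIV (\<lambda>t::real. (origin(0 := t)) i)"
      by (cases "i = 0") (auto simp: origin_def)
  qed
  then show ?thesis
    unfolding Rn_1_eq_range by (intro connected_continuous_image) auto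
qed

lemma open_in_Rn_self: "open_in_Rn n (Rn n)"
  unfolding open_in_Rn_def by simp

lemma open_in_Rn_contains_small_multiples:
  assumes "open_in_Rn n U" "origin \<in> U" "v \<in> Rn n"
  obtains d where "d > 0" "\<And>s. \<bar>s\<bar> < d \<Longrightarrow> (\<lambda>j. s * v j) \<in> U"
proof -
  obtain T where T: "open T" "U = Rn n \<inter> T"
    using assms(1) unfolding open_in_Rn_def by (auto simp: openin_open)
  let ?line = "\<lambda>s::real. \<lambda>j. s * v j"
  have "continuous_on UNIV ?line"
    by (intro continuous_on_coordinatewise_then_product continuous_intros)
  then have "open (?line -` T)"
    using T(1) by (rule open_vimage[rotated])
  moreover have "0 \<in> ?line -` T"
    using assms(2) T(2) by (simp add: origin_def)
  ultimately obtain d where "d > 0" "\<And>s. dist s 0 < d \<Longrightarrow> s \<in> ?line -` T"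
    unfolding open_dist by blast
  moreover have "?line s \<in> Rn n" for s
    using assms(3) by (auto simp: Rn_def)
  ultimately show thesis
    using that T(2) by (auto simp: dist_real_def)
qed

lemma sin_ray_curve_in_obj_G:
  assumes "diffeology X D" "(n, U, p) \<in> obj_G D x" "v \<in> Rn n"
    and segment: "\<And>s. \<bar>s\<bar> \<le> 1 \<Longrightarrow> (\<lambda>j. s * v j) \<in> U"
  defines "c \<equiv> (1, Rn 1, restrict (p \<circ> sin_ray v) (Rn 1))"
  shows "c \<in> obj_G D x" and "mor_rep c (n, U, p) (Rn 1, sin_ray v)"
proof -
  have p: "(n, U, p) \<in> D" "origin \<in> U" "p origin = x"
    using assms(2) by (auto simp: obj_G_def)
  have image: "sin_ray v ` Rn 1 \<subseteq> U"
    using segment abs_sin_le_one by (auto simp: sin_ray_def)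
  have "(1, Rn 1, restrict (p \<circ> sin_ray v) (Rn 1)) \<in> D"
  proof -
    have "\<forall>n U p m V g. (n, U, p) \<in> D \<and> open_in_Rn m V \<and> g ` V \<subseteq> U \<and> smooth_map m V g
        \<longrightarrow> (m, V, restrict (p \<circ> g) V) \<in> D"
      using assms(1) unfolding diffeology_def by (elim conjE) assumption
    then show ?thesis
      using p(1) open_in_Rn_self image smooth_map_sin_ray by blast
  qed
  moreover have "origin \<in> Rn 1" "sin_ray v origin = origin"
    by (simp_all add: Rn_def origin_def sin_ray_def fun_eq_iff)
  ultimately show "c \<in> obj_G D x" "mor_rep c (n, U, p) (Rn 1, sin_ray v)"
    using connected_Rn_1 p(3) open_in_Rn_self image smooth_map_sin_ray
    by (auto simp: obj_G_def mor_rep_def c_def)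
qed

lemma cocone_G_push:
  assumes "cocone_G D x \<phi>" "p \<in> obj_G D x" "q \<in> obj_G D x" "mor_rep p q r" "v \<in> Rn (fst p)"
  shows "\<phi> q (push (fst p) (fst q) (snd r) v) = \<phi> p v"
  using assms unfolding cocone_G_def by blast

lemma linear_on_Rn_eq_if_eq_on_multiple:
  assumes "linear_on_Rn n f" "linear_on_Rn n h" "v \<in> Rn n" "a \<noteq> 0"
    and "f (\<lambda>i. a * v i) = h (\<lambda>i. a * v i)"
  shows "f v = h v"
proof -
  have "(\<lambda>i. a * v i) \<in> Rn n"
    using assms(3) by (simp add: Rn_def)
  then have "f (\<lambda>i. inverse a * (a * v i)) = h (\<lambda>i. inverse a * (a * v i))"
    using assms(1,2,5) unfolding linear_on_Rn_def by metis
  moreover have "(\<lambda>i. inverse a * (a * v i)) = v"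
    using assms(4) by (simp add: fun_eq_iff)
  ultimately show ?thesis
    by simp
qed

lemma cocones_eq_on_curves_if_eq_on_generating_set:
  assumes "local_generating_set D x C" "cocone_G D x \<phi>" "cocone_G D x \<psi>"
    and "\<forall>q\<in>C. \<forall>v\<in>Rn (fst q). \<phi> q v = \<psi> q v"
    and "c \<in> obj_G D x" "fst c = 1" "fst (snd c) = Rn 1" "v \<in> Rn 1"
  shows "\<phi> c v = \<psi> c v"
proof -
  obtain q r where q: "q \<in> C" "mor_rep c q r"
    using assms(1,5-7) unfolding local_generating_set_def by blast
  then have "q \<in> obj_G D x"
    using assms(1) unfolding local_generating_set_def by blast
  moreover have "push 1 (fst q) (snd r) v \<in> Rn (fst q)"
    by (simp add: push_def Rn_def)
  ultimately show ?thesis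
    using cocone_G_push[OF assms(2,5)] cocone_G_push[OF assms(3,5)] q assms(4,6,8)
    by metis
qed

lemma cocones_eq_if_eq_on_curves:
  assumes "diffeology X D" "cocone_G D x \<phi>" "cocone_G D x \<psi>"
    and curves: "\<And>c v. c \<in> obj_G D x \<Longrightarrow> fst c = 1 \<Longrightarrow> fst (snd c) = Rn 1 \<Longrightarrow> v \<in> Rn 1
      \<Longrightarrow> \<phi> c v = \<psi> c v"
    and "(n, U, p) \<in> obj_G D x" "v \<in> Rn n"
  shows "\<phi> (n, U, p) v = \<psi> (n, U, p) v"
proof -
  let ?P = "(n, U, p)"
  have "open_in_Rn n U" "origin \<in> U"
    using assms(1,5) unfolding obj_G_def diffeology_def by auto
  then obtain d where d: "d > 0" "\<And>s. \<bar>s\<bar> < d \<Longrightarrow> (\<lambda>j. s * v j) \<in> U"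
    using open_in_Rn_contains_small_multiples assms(6) by metis
  define w where "w = (\<lambda>j. d / 2 * v j)"
  have w: "w \<in> Rn n"
    using assms(6) by (simp add: w_def Rn_def)
  have segment: "(\<lambda>j. s * w j) \<in> U" if "\<bar>s\<bar> \<le> 1" for s
  proof -
    have "\<bar>s * (d / 2)\<bar> < d"
      using that d(1) by (auto simp: abs_mult)
    moreover have "(\<lambda>j. s * w j) = (\<lambda>j. s * (d / 2) * v j)"
      by (simp add: w_def fun_eq_iff)
    ultimately show ?thesis
      using d(2) by metis
  qed
  define c where "c = (1::nat, Rn 1, restrict (p \<circ> sin_ray w) (Rn 1))"
  note curve = sin_ray_curve_in_obj_G[OF assms(1,5) w segment, folded c_def]
  have e0: "origin(0 := 1) \<in> Rn (fst c)"
    by (simp add: c_def Rn_def origin_def)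
  have "\<phi> ?P w = \<phi> c (origin(0 := 1))"
    using cocone_G_push[OF assms(2) curve(1) assms(5) curve(2) e0] push_sin_ray[OF w]
    by (simp add: c_def)
  also have "\<dots> = \<psi> c (origin(0 := 1))"
    using curves curve(1) e0 by (simp add: c_def)
  also have "\<dots> = \<psi> ?P w"
    using cocone_G_push[OF assms(3) curve(1) assms(5) curve(2) e0] push_sin_ray[OF w]
    by (simp add: c_def)
  finally have "\<phi> ?P w = \<psi> ?P w" .
  moreover have "linear_on_Rn n (\<phi> ?P)" "linear_on_Rn n (\<psi> ?P)"
    using assms(2,3,5) unfolding cocone_G_def by auto
  ultimately show ?thesis
    using linear_on_Rn_eq_if_eq_on_multiple[of n "\<phi> ?P" "\<psi> ?P" v "d / 2"] assms(6) d(1)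
    by (simp add: w_def)
qed

theorem proposition3p3:
  fixes X :: "'a set" and D :: "'a plot set" and x :: 'a
    and Ob :: "'a plot set"
    and Mo :: "('a plot \<times> 'a plot \<times> ((nat \<Rightarrow> real) set \<times> ((nat \<Rightarrow> real) \<Rightarrow> (nat \<Rightarrow> real))) set) set"
    and \<phi> \<psi> :: "'a plot \<Rightarrow> (nat \<Rightarrow> real) \<Rightarrow> 'w::real_vector"
  assumes "diffeology X D" and "x \<in> X"
    and "local_generating_category D x Ob Mo"
    and "cocone_G D x \<phi>" and "cocone_G D x \<psi>"
    and "\<forall>p\<in>Ob. \<forall>v\<in>Rn (fst p). \<phi> p v = \<psi> p v"
  shows "\<forall>p\<in>obj_G D x. \<forall>v\<in>Rn (fst p). \<phi> p v = \<psi> p v"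
proof (intro ballI)
  fix P v assume "P \<in> obj_G D x" "v \<in> Rn (fst P)"
  moreover have "local_generating_set D x Ob"
    using assms(3) unfolding local_generating_category_def by blast
  ultimately show "\<phi> P v = \<psi> P v"
    using cocones_eq_if_eq_on_curves[OF assms(1,4,5)]
      cocones_eq_on_curves_if_eq_on_generating_set[OF _ assms(4,5,6)]
    by (cases P) auto
qed

end
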